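(* Let $\mathbb{K}$ be a field of characteristic zero containing all complex roots of unity and $q$ an indeterminate transcendental over $\mathbb{K}$. Let $f_n(q)$ be a $q$-holonomic sequence satisfying a recurrence $\sum_{j=0}^d c_j(q,q^n)f_{n+j}(q)=0$ for all $n\in\mathbb{N}$, with $c_j\in\mathbb{K}[u,v]$ and $c_d\neq0$ (order $d$). Then for any root of unity $\omega\in\mathbb{C}$ of order $m$, the sequence $f_n(\omega q)$ is $q$-holonomic as well and satisfies a recurrence of this form of order at most $m\cdot d$.
   Context: A sequence $f_n(q)$ is $q$-holonomic if it satisfies a nontrivial linear recurrence $\sum_{j=0}^d c_j(q,q^n)f_{n+j}(q)=0$ for all $n\in\mathbb{N}$, with bivariate polynomials $c_j(u,v)\in\mathbb{K}[u,v]$ and $c_d\neq0$. *)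

theory Defs
  imports "HOL-Computational_Algebra.Polynomial" "HOL-Computational_Algebra.Fraction_Field"
begin

type_synonym 'a ratfun = "'a poly fract"

definition qvar :: "'a::idom ratfun" where
  "qvar = Fract [:0, 1:] 1"

definition const_rf :: "'a::idom \<Rightarrow> 'a ratfun" where
  "const_rf a = Fract [:a:] 1"

text \<open>A bivariate polynomial c(u,v) in K[u,v] is represented as an element of (K[u])[v];
  eval_bivar c x y is c(x,y).\<close>

definition eval_bivar :: "'a::idom poly poly \<Rightarrow> 'a ratfun \<Rightarrow> 'a ratfun \<Rightarrow> 'a ratfun" where
  "eval_bivar c x y = poly (map_poly (\<lambda>p. poly (map_poly const_rf p) x) c) y"

definition subst_rf :: "'a::idom \<Rightarrow> 'a ratfun \<Rightarrow> 'a ratfun" where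
  "subst_rf w r = (let ab = (SOME ab. snd ab \<noteq> 0 \<and> r = Fract (fst ab) (snd ab))
                   in Fract (pcompose (fst ab) [:0, w:]) (pcompose (snd ab) [:0, w:]))"

definition q_holonomic_rec :: "nat \<Rightarrow> (nat \<Rightarrow> 'a::idom poly poly) \<Rightarrow> (nat \<Rightarrow> 'a ratfun) \<Rightarrow> bool" where
  "q_holonomic_rec d c f \<longleftrightarrow> c d \<noteq> 0 \<and>
     (\<forall>n. (\<Sum>j\<le>d. eval_bivar (c j) qvar (qvar ^ n) * f (n + j)) = 0)"

end

theory Submission
  imports Defs
begin

text \<open>After the substitution q \<mapsto> \<omega> q the recurrence shifted by i reads
  \<Sum>j A(i,j)(q, y) g(n+i+j) = 0 with A(i,j)(u, v) = c(j)(\<omega> u, \<omega>^i u^i v) and y = \<omega>^n q^n,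
  so the coefficients depend on n through y rather than through q^n.
  Combine the shifts i \<le> (m-1) d with polynomial multipliers \<lambda>(i)(u, v): there are more
  unknown coefficients of the \<lambda>(i) than coefficients of v^e with m \<not> e in the combined
  coefficients B(k), so all the latter can be made to vanish. Then B(k)(q, y) = B(k)(q, q^n)
  because y^m = q^(m n), and the largest i with \<lambda>(i) \<noteq> 0 yields a nonzero leading
  coefficient of index at most (m-1) d + d.\<close>

locale comm_ring_hom =
  fixes h :: "'a::comm_ring_1 \<Rightarrow> 'b::comm_ring_1"
  assumes hom_add: "h (a + b) = h a + h b"
    and hom_mult: "h (a * b) = h a * h b"
    and hom_one: "h 1 = 1"
begin

lemma hom_zero: "h 0 = 0"
  using hom_add[of 0 0] by simp

lemma hom_sum: "h (sum g A) = (\<Sum>x\<in>A. h (g x))"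
  by (induction A rule: infinite_finite_induct) (auto simp: hom_zero hom_add)

lemma hom_power: "h (a ^ n) = h a ^ n"
  by (induction n) (auto simp: hom_one hom_mult)

lemma map_poly_hom_add: "map_poly h (p + q) = map_poly h p + map_poly h q"
  by (intro poly_eqI) (simp add: coeff_map_poly hom_zero hom_add)

lemma map_poly_hom_mult: "map_poly h (p * q) = map_poly h p * map_poly h q"
  by (intro poly_eqI) (simp add: coeff_map_poly hom_zero coeff_mult hom_sum hom_mult)

lemma comm_ring_hom_poly_map_poly: "comm_ring_hom (\<lambda>p. poly (map_poly h p) x)"
  by unfold_locales (simp_all add: map_poly_hom_add map_poly_hom_mult hom_one)

lemma poly_map_poly_pcompose:
  "poly (map_poly h (pcompose p q)) x = poly (map_poly h p) (poly (map_poly h q) x)"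
proof (induction p)
  case (pCons a p)
  interpret ev: comm_ring_hom "\<lambda>p. poly (map_poly h p) x"
    by (rule comm_ring_hom_poly_map_poly)
  show ?case
    using pCons by (simp add: pcompose_pCons ev.hom_add ev.hom_mult map_poly_pCons hom_zero)
qed simp

lemma hom_poly_map_poly:
  assumes "comm_ring_hom g"
  shows "g (poly (map_poly h p) x) = poly (map_poly (g \<circ> h) p) (g x)"
proof (induction p)
  case 0
  show ?case by (simp add: comm_ring_hom.hom_zero[OF assms])
next
  case (pCons a p)
  have "(g \<circ> h) 0 = 0" by (simp add: hom_zero comm_ring_hom.hom_zero[OF assms])
  with pCons show ?case
    by (simp add: map_poly_pCons hom_zero comm_ring_hom.hom_add[OF assms]
        comm_ring_hom.hom_mult[OF assms])
qed

end

lemma comm_ring_hom_const_rf: "comm_ring_hom (const_rf :: 'a::idom \<Rightarrow> 'a ratfun)"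
  by unfold_locales (simp_all add: const_rf_def One_fract_def mult.commute one_pCons)

lemma pcompose_scale_eq_0_iff: "(w::'a::idom) \<noteq> 0 \<Longrightarrow> pcompose p [:0, w:] = 0 \<longleftrightarrow> p = 0"
  using pcompose_eq_0_iff[of "[:0, w:]" p] by simp

lemma subst_rf_Fract:
  fixes w :: "'a::idom"
  assumes w: "w \<noteq> 0" and b: "b \<noteq> 0"
  shows "subst_rf w (Fract a b) = Fract (pcompose a [:0, w:]) (pcompose b [:0, w:])"
proof -
  define ab where "ab = (SOME ab. snd ab \<noteq> 0 \<and> Fract a b = Fract (fst ab) (snd ab))"
  have "snd ab \<noteq> 0 \<and> Fract a b = Fract (fst ab) (snd ab)"
    unfolding ab_def by (rule someI[of _ "(a, b)"]) (simp add: b)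
  then have ab: "snd ab \<noteq> 0" "a * snd ab = fst ab * b"
    using b by (auto simp: eq_fract(1))
  then have "pcompose a [:0, w:] * pcompose (snd ab) [:0, w:]
      = pcompose (fst ab) [:0, w:] * pcompose b [:0, w:]"
    by (metis pcompose_mult)
  with ab(1) show ?thesis
    unfolding subst_rf_def ab_def[symmetric]
    by (simp add: Let_def eq_fract(1) pcompose_scale_eq_0_iff w b)
qed

lemma comm_ring_hom_subst_rf:
  fixes w :: "'a::idom"
  assumes w: "w \<noteq> 0"
  shows "comm_ring_hom (subst_rf w)"
proof
  fix x y :: "'a ratfun"
  obtain a b c d where xy: "x = Fract a b" "b \<noteq> 0" "y = Fract c d" "d \<noteq> 0"
    by (cases x, cases y) auto
  show "subst_rf w (x + y) = subst_rf w x + subst_rf w y"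
    and "subst_rf w (x * y) = subst_rf w x * subst_rf w y"
    using xy w by (simp_all add: subst_rf_Fract pcompose_scale_eq_0_iff pcompose_add pcompose_mult)
next
  show "subst_rf w 1 = 1"
    using w by (simp add: One_fract_def subst_rf_Fract pcompose_1)
qed

lemma subst_rf_const_rf: "(w::'a::idom) \<noteq> 0 \<Longrightarrow> subst_rf w (const_rf a) = const_rf a"
  by (simp add: const_rf_def subst_rf_Fract pcompose_1)

lemma subst_rf_qvar: "(w::'a::idom) \<noteq> 0 \<Longrightarrow> subst_rf w qvar = const_rf w * qvar"
  by (simp add: const_rf_def qvar_def subst_rf_Fract pcompose_pCons pcompose_1)

lemma comm_ring_hom_eval_bivar: "comm_ring_hom (\<lambda>P. eval_bivar P x y)"
  unfolding eval_bivar_def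
  by (intro comm_ring_hom.comm_ring_hom_poly_map_poly comm_ring_hom_const_rf)

lemma subst_rf_eval_bivar:
  fixes w :: "'a::idom"
  assumes w: "w \<noteq> 0"
  shows "subst_rf w (eval_bivar P x y) = eval_bivar P (subst_rf w x) (subst_rf w y)"
proof -
  have s: "comm_ring_hom (subst_rf w)" by (rule comm_ring_hom_subst_rf[OF w])
  have "subst_rf w \<circ> (\<lambda>p. poly (map_poly const_rf p) x)
      = (\<lambda>p. poly (map_poly const_rf p) (subst_rf w x))"
    using comm_ring_hom.hom_poly_map_poly[OF comm_ring_hom_const_rf s]
    by (auto simp: comp_def subst_rf_const_rf[OF w])
  then show ?thesis
    unfolding eval_bivar_def
    using comm_ring_hom.hom_poly_map_poly
        [OF comm_ring_hom.comm_ring_hom_poly_map_poly[OF comm_ring_hom_const_rf] s]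
    by simp
qed

definition rescale_bivar :: "'a::idom \<Rightarrow> nat \<Rightarrow> 'a poly poly \<Rightarrow> 'a poly poly" where
  "rescale_bivar w i P = pcompose (map_poly (\<lambda>p. pcompose p [:0, w:]) P) [:0, monom (w ^ i) i:]"

lemma rescale_bivar_eq_0_iff: "(w::'a::idom) \<noteq> 0 \<Longrightarrow> rescale_bivar w i P = 0 \<longleftrightarrow> P = 0"
  by (auto simp: rescale_bivar_def pcompose_eq_0_iff map_poly_eq_0_iff pcompose_scale_eq_0_iff)

lemma eval_rescale_bivar:
  fixes w :: "'a::idom"
  shows "eval_bivar (rescale_bivar w i P) x y
    = eval_bivar P (const_rf w * x) (const_rf (w ^ i) * x ^ i * y)"
proof -
  let ?h = "\<lambda>x p. poly (map_poly (const_rf :: 'a \<Rightarrow> 'a ratfun) p) x"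
  interpret c: comm_ring_hom "const_rf :: 'a \<Rightarrow> 'a ratfun"
    by (rule comm_ring_hom_const_rf)
  have "?h x \<circ> (\<lambda>p. pcompose p [:0, w:]) = ?h (const_rf w * x)"
    by (auto simp: c.poly_map_poly_pcompose map_poly_pCons c.hom_zero mult.commute)
  moreover have "map_poly (?h x) [:0, monom (w ^ i) i:] = [:0, const_rf (w ^ i) * x ^ i:]"
    by (simp add: map_poly_pCons map_poly_monom poly_monom c.hom_zero)
  ultimately show ?thesis
    unfolding eval_bivar_def rescale_bivar_def
    by (simp add: comm_ring_hom.poly_map_poly_pcompose[OF c.comm_ring_hom_poly_map_poly]
        map_poly_map_poly mult.commute)
qed

lemma eval_bivar_root_of_unity_invariant:
  fixes t :: "'a::idom"
  assumes "\<forall>e. \<not> m dvd e \<longrightarrow> coeff P e = 0" and "t ^ m = 1"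
  shows "eval_bivar P x (const_rf t * y) = eval_bivar P x y"
proof -
  interpret c: comm_ring_hom "const_rf :: 'a \<Rightarrow> 'a ratfun"
    by (rule comm_ring_hom_const_rf)
  let ?h = "\<lambda>p. poly (map_poly (const_rf :: 'a \<Rightarrow> 'a ratfun) p) x"
  have "?h (coeff P e) * (const_rf t * y) ^ e = ?h (coeff P e) * y ^ e" for e
  proof (cases "m dvd e")
    case True
    then have "const_rf t ^ e = 1"
      using assms(2) by (auto simp: power_mult c.hom_one simp flip: c.hom_power)
    then show ?thesis by (simp add: power_mult_distrib)
  qed (use assms(1) in simp)
  moreover have "poly (map_poly ?h P) z = (\<Sum>e\<le>degree (map_poly ?h P). ?h (coeff P e) * z ^ e)"
    for z by (subst poly_altdef) (simp add: coeff_map_poly)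
  ultimately show ?thesis
    unfolding eval_bivar_def by (metis (no_types, lifting) sum.cong)
qed

lemma homogeneous_system_nontrivial_solution_list:
  fixes eqs :: "('v \<Rightarrow> 'r::idom) list"
  assumes "finite V" "length eqs < card V"
  shows "\<exists>x. (\<exists>v\<in>V. x v \<noteq> 0) \<and> (\<forall>a\<in>set eqs. (\<Sum>v\<in>V. a v * x v) = 0)"
  using assms
proof (induction "length eqs" arbitrary: eqs V)
  case 0
  then obtain v0 where "v0 \<in> V" by fastforce
  with 0 show ?case by (intro exI[of _ "\<lambda>v. if v = v0 then 1 else 0"]) auto
next
  case (Suc n)
  then obtain a rest where eqs: "eqs = a # rest" and n: "n = length rest"
    by (cases eqs) auto
  show ?case
  proof (cases "\<forall>v\<in>V. a v = 0")
    case True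
    with Suc.hyps(1)[OF n] Suc.prems Suc.hyps(2) eqs show ?thesis by auto
  next
    case False
    then obtain v0 where v0: "v0 \<in> V" "a v0 \<noteq> 0" by auto
    define V' where "V' = V - {v0}"
    \<comment> \<open>Gaussian elimination of the unknown at v0 using the first equation.\<close>
    define rest' where "rest' = map (\<lambda>b v. b v * a v0 - b v0 * a v) rest"
    have "n = length rest'" "finite V'" "length rest' < card V'"
      using Suc v0 eqs n by (simp_all add: V'_def rest'_def)
    from Suc.hyps(1)[OF this] obtain y where y_nz: "\<exists>v\<in>V'. y v \<noteq> 0"
      and y_sol: "\<forall>b\<in>set rest'. (\<Sum>v\<in>V'. b v * y v) = 0" by blast
    define x where "x = (\<lambda>v. if v = v0 then - (\<Sum>w\<in>V'. a w * y w) else a v0 * y v)"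
    have split: "(\<Sum>v\<in>V. b v * x v) = b v0 * x v0 + (\<Sum>v\<in>V'. b v * (a v0 * y v))" for b
      using Suc.prems(1) v0 by (simp add: V'_def sum.remove x_def)
    have "\<exists>v\<in>V. x v \<noteq> 0"
      using y_nz v0 by (force simp: x_def V'_def)
    moreover have "(\<Sum>v\<in>V. a v * x v) = 0"
      unfolding split by (simp add: x_def sum_distrib_left algebra_simps)
    moreover have "(\<Sum>v\<in>V. b v * x v) = 0" if b: "b \<in> set rest" for b
    proof -
      have "(\<Sum>v\<in>V'. (b v * a v0 - b v0 * a v) * y v) = 0"
        using y_sol b by (auto simp: rest'_def)
      then show ?thesis
        unfolding split by (simp add: x_def algebra_simps sum_subtractf sum_distrib_left)
    qed
    ultimately show ?thesis using eqs by auto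
  qed
qed

lemma homogeneous_system_nontrivial_solution:
  fixes E :: "('v \<Rightarrow> 'r::idom) set"
  assumes "finite V" "finite E" "card E < card V"
  shows "\<exists>x. (\<exists>v\<in>V. x v \<noteq> 0) \<and> (\<forall>a\<in>E. (\<Sum>v\<in>V. a v * x v) = 0)"
proof -
  obtain eqs where "set eqs = E" "distinct eqs"
    using assms(2) finite_distinct_list by blast
  with assms show ?thesis
    using homogeneous_system_nontrivial_solution_list[OF assms(1), of eqs]
    by (metis distinct_card)
qed

definition rec_combination ::
    "nat \<Rightarrow> nat \<Rightarrow> (nat \<Rightarrow> 'r::comm_ring_1) \<Rightarrow> (nat \<Rightarrow> nat \<Rightarrow> 'r) \<Rightarrow> nat \<Rightarrow> 'r" where
  "rec_combination N d lam A k = (\<Sum>i\<le>N. \<Sum>j\<le>d. if i + j = k then lam i * A i j else 0)"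

lemma rec_combination_alt:
  "rec_combination N d lam A k = (\<Sum>i\<le>N. if i \<le> k \<and> k - i \<le> d then lam i * A i (k - i) else 0)"
proof -
  have "(\<Sum>j\<le>d. if i + j = k then lam i * A i j else 0)
      = (if i \<le> k \<and> k - i \<le> d then lam i * A i (k - i) else 0)" for i
  proof (cases "i \<le> k")
    case True
    then have "(\<Sum>j\<le>d. if i + j = k then lam i * A i j else 0)
        = (\<Sum>j\<le>d. if j = k - i then lam i * A i j else 0)"
      by (intro sum.cong) auto
    then show ?thesis using True by simp
  qed simp
  then show ?thesis unfolding rec_combination_def by simp
qed

lemma sum_rec_combination:
  "(\<Sum>k\<le>N + d. rec_combination N d lam A k * g k) = (\<Sum>i\<le>N. lam i * (\<Sum>j\<le>d. A i j * g (i + j)))"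
proof -
  have "(\<Sum>k\<le>N + d. rec_combination N d lam A k * g k)
      = (\<Sum>k\<le>N + d. \<Sum>i\<le>N. \<Sum>j\<le>d. if i + j = k then lam i * A i j * g k else 0)"
    unfolding rec_combination_def sum_distrib_right by (intro sum.cong refl) auto
  also have "\<dots> = (\<Sum>i\<le>N. \<Sum>j\<le>d. \<Sum>k\<le>N + d. if k = i + j then lam i * A i j * g k else 0)"
    by (subst sum.swap, subst (2) sum.swap) (simp add: eq_commute)
  also have "\<dots> = (\<Sum>i\<le>N. lam i * (\<Sum>j\<le>d. A i j * g (i + j)))"
    by (simp add: sum_distrib_left mult.assoc)
  finally show ?thesis .
qed

lemma (in comm_ring_hom) hom_rec_combination:
  "h (rec_combination N d lam A k) = rec_combination N d (h \<circ> lam) (\<lambda>i j. h (A i j)) k"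
  unfolding rec_combination_def hom_sum by (intro sum.cong refl) (simp add: hom_mult hom_zero)

lemma rec_combination_leading:
  fixes lam :: "nat \<Rightarrow> 'r::idom"
  assumes A: "\<forall>i\<le>N. A i d \<noteq> 0" and i1: "i1 \<le> N" "lam i1 \<noteq> 0"
  shows "\<exists>i0\<le>N. rec_combination N d lam A (i0 + d) \<noteq> 0
    \<and> (\<forall>k>i0 + d. rec_combination N d lam A k = 0)"
proof -
  define I where "I = {i. i \<le> N \<and> lam i \<noteq> 0}"
  define i0 where "i0 = Max I"
  have I: "finite I" "i1 \<in> I" using i1 by (auto simp: I_def)
  then have "i0 \<in> I" unfolding i0_def by (intro Max_in) auto
  then have i0: "i0 \<le> N" "lam i0 \<noteq> 0" by (auto simp: I_def)
  have above: "lam i = 0" if "i0 < i" "i \<le> N" for i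
  proof (rule ccontr)
    assume "lam i \<noteq> 0"
    with that(2) have "i \<le> i0" unfolding i0_def using I(1) by (simp add: I_def)
    with that(1) show False by simp
  qed
  have "rec_combination N d lam A (i0 + d) = (\<Sum>i\<le>N. if i = i0 then lam i0 * A i0 d else 0)"
    unfolding rec_combination_alt
    by (intro sum.cong refl) (auto simp: above dest: le_neq_implies_less)
  with i0 A have "rec_combination N d lam A (i0 + d) \<noteq> 0" by simp
  moreover have "rec_combination N d lam A k = 0" if "k > i0 + d" for k
    unfolding rec_combination_alt using that above by (intro sum.neutral) auto
  ultimately show ?thesis using i0 by blast
qed

lemma degree_rec_combination_le:
  assumes "\<forall>i\<le>N. degree (lam i) \<le> M" "\<forall>i\<le>N. \<forall>j\<le>d. degree (A i j) \<le> a"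
  shows "degree (rec_combination N d lam A k) \<le> M + a"
  unfolding rec_combination_alt
proof (intro degree_sum_le)
  fix i assume "i \<in> {..N}"
  with assms show "degree (if i \<le> k \<and> k - i \<le> d then lam i * A i (k - i) else 0) \<le> M + a"
    by (auto intro!: order.trans[OF degree_mult_le] add_mono)
qed simp

lemma card_non_multiples_less:
  assumes "(m::nat) > 0"
  shows "card {e. e < m * Z \<and> \<not> m dvd e} = m * Z - Z"
proof -
  have multiples: "{e. e < m * Z \<and> m dvd e} = (\<lambda>t. m * t) ` {..<Z}"
    using assms by (auto elim!: dvdE)
  have "card {e. e < m * Z \<and> m dvd e} = Z"
    unfolding multiples using assms by (subst card_image) (auto simp: inj_on_def)
  moreover have "{..<m * Z} = {e. e < m * Z \<and> \<not> m dvd e} \<union> {e. e < m * Z \<and> m dvd e}"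
    by auto
  then have "m * Z = card {e. e < m * Z \<and> \<not> m dvd e} + card {e. e < m * Z \<and> m dvd e}"
    by (metis (no_types, lifting) card_Un_disjoint card_lessThan disjoint_iff finite_lessThan
        finite_Un mem_Collect_eq)
  ultimately show ?thesis by simp
qed

lemma coeff_rec_combination_monoms:
  "coeff (rec_combination N d (\<lambda>i. \<Sum>e'\<le>M. monom (x (i, e')) e') A k) e
    = (\<Sum>(i, e')\<in>{..N} \<times> {..M}.
         (if i \<le> k \<and> k - i \<le> d \<and> e' \<le> e then coeff (A i (k - i)) (e - e') else 0) * x (i, e'))"
proof -
  have "coeff ((\<Sum>e'\<le>M. monom (x (i, e')) e') * Q) e
      = (\<Sum>e'\<le>M. if e' \<le> e then x (i, e') * coeff Q (e - e') else 0)" for i Q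
    unfolding sum_distrib_right coeff_sum by (intro sum.cong) (auto simp: coeff_monom_mult)
  then show ?thesis
    unfolding rec_combination_alt coeff_sum sum.cartesian_product[symmetric]
    by (intro sum.cong) (auto simp: mult.commute intro!: sum.cong)
qed

lemma exists_multipliers_with_divisible_exponents:
  fixes A :: "nat \<Rightarrow> nat \<Rightarrow> 'r::idom poly" and m d :: nat
  assumes m: "m > 0"
  defines "N \<equiv> (m - 1) * d"
  shows "\<exists>lam. (\<exists>i\<le>N. lam i \<noteq> 0)
    \<and> (\<forall>k e. \<not> m dvd e \<longrightarrow> coeff (rec_combination N d lam A k) e = 0)"
proof -
  define a where "a = (\<Sum>i\<le>N. \<Sum>j\<le>d. degree (A i j))"
  define Z where "Z = (N + 1) * a + 1"
  define M where "M = m * Z - a - 1"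
  \<comment> \<open>Unknowns: the coefficients of v^e' in lam i; equations: the coefficients of v^e, m \<not> e,
    in the combination, which has degree less than m Z. This choice of Z makes the unknowns
    outnumber the equations by exactly one.\<close>
  define V where "V = {..N} \<times> {..M}"
  define W where "W = {..N + d} \<times> {e. e < m * Z \<and> \<not> m dvd e}"
  define equation where "equation = (\<lambda>(k, e) (i, e').
    if i \<le> k \<and> k - i \<le> d \<and> e' \<le> e then coeff (A i (k - i)) (e - e') else 0)"
  have aZ: "a < m * Z"
    using m unfolding Z_def by (cases m) (auto simp: algebra_simps)
  have deg_A: "\<forall>i\<le>N. \<forall>j\<le>d. degree (A i j) \<le> a"
    unfolding a_def by (auto intro!: order.trans[OF _ member_le_sum[of _ "{..N}"]] member_le_sum)
  have "card W < card V"
  proof -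
    obtain m' where m': "m = Suc m'" using m by (cases m) auto
    have "int (card W) + 1 = int (card V)"
      using card_non_multiples_less[OF m, of Z] aZ
      by (simp add: V_def W_def M_def N_def Z_def m' card_cartesian_product of_nat_diff algebra_simps)
    then show ?thesis by linarith
  qed
  then have "card (equation ` W) < card V"
    using card_image_le[of W equation] by (simp add: W_def)
  then obtain x where x_nz: "\<exists>v\<in>V. x v \<noteq> 0"
    and x_sol: "\<forall>eq\<in>equation ` W. (\<Sum>v\<in>V. eq v * x v) = 0"
    using homogeneous_system_nontrivial_solution[of V "equation ` W"] by (auto simp: V_def W_def)
  define lam where "lam = (\<lambda>i. \<Sum>e'\<le>M. monom (x (i, e')) e')"
  have coeff_B: "coeff (rec_combination N d lam A k) e = (\<Sum>v\<in>V. equation (k, e) v * x v)" for k e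
    unfolding lam_def coeff_rec_combination_monoms V_def equation_def
    by (intro sum.cong) auto
  have "degree (lam i) \<le> M" for i
    unfolding lam_def by (intro degree_sum_le) (auto intro: order.trans[OF degree_monom_le])
  then have deg_B: "degree (rec_combination N d lam A k) < m * Z" for k
    using degree_rec_combination_le[OF _ deg_A, of lam M k] aZ by (simp add: M_def)
  have "coeff (rec_combination N d lam A k) e = 0" if "\<not> m dvd e" for k e
  proof (cases "e < m * Z \<and> k \<le> N + d")
    case True
    with that x_sol show ?thesis by (simp add: coeff_B W_def)
  next
    case False
    moreover have "rec_combination N d lam A k = 0" if "k > N + d"
      unfolding rec_combination_alt using that by (intro sum.neutral) auto
    ultimately show ?thesis using deg_B[of k] by (auto simp: coeff_eq_0)
  qed
  moreover obtain i e' where "i \<le> N" "e' \<le> M" "x (i, e') \<noteq> 0"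
    using x_nz by (auto simp: V_def)
  then have "lam i \<noteq> 0" "i \<le> N"
    by (auto simp: lam_def poly_eq_iff coeff_sum coeff_monom intro!: exI[of _ e'])
  ultimately show ?thesis by blast
qed

lemma eval_rescale_bivar_qvar:
  fixes w :: "'a::idom"
  assumes w: "w \<noteq> 0"
  shows "eval_bivar (rescale_bivar w i P) qvar (const_rf (w ^ n) * qvar ^ n)
    = subst_rf w (eval_bivar P qvar (qvar ^ (n + i)))"
proof -
  interpret s: comm_ring_hom "subst_rf w" by (rule comm_ring_hom_subst_rf[OF w])
  interpret c: comm_ring_hom "const_rf :: 'a \<Rightarrow> 'a ratfun" by (rule comm_ring_hom_const_rf)
  have "subst_rf w (qvar ^ (n + i)) = (const_rf w * qvar) ^ (n + i)"
    by (simp only: s.hom_power subst_rf_qvar[OF w])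
  also have "\<dots> = const_rf (w ^ i) * qvar ^ i * (const_rf (w ^ n) * qvar ^ n)"
    by (simp add: c.hom_power power_mult_distrib power_add algebra_simps)
  finally show ?thesis
    by (simp add: eval_rescale_bivar subst_rf_eval_bivar[OF w] subst_rf_qvar[OF w])
qed

lemma subst_rf_combined_recurrence:
  fixes w :: "'a::idom" and c lam :: "nat \<Rightarrow> 'a poly poly" and f :: "nat \<Rightarrow> 'a ratfun"
    and N d m :: nat
  defines "B \<equiv> rec_combination N d lam (\<lambda>i j. rescale_bivar w i (c j))"
  assumes w: "w \<noteq> 0" "w ^ m = 1"
    and rec_f: "\<forall>n. (\<Sum>j\<le>d. eval_bivar (c j) qvar (qvar ^ n) * f (n + j)) = 0"
    and divisible: "\<forall>k e. \<not> m dvd e \<longrightarrow> coeff (B k) e = 0"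
    and top: "K \<le> N + d" "\<forall>k>K. B k = 0"
  shows "(\<Sum>k\<le>K. eval_bivar (B k) qvar (qvar ^ n) * subst_rf w (f (n + k))) = 0"
proof -
  interpret s: comm_ring_hom "subst_rf w" by (rule comm_ring_hom_subst_rf[OF w(1)])
  define y where "y = const_rf (w ^ n) * qvar ^ n"
  interpret ev: comm_ring_hom "\<lambda>P. eval_bivar P qvar y" by (rule comm_ring_hom_eval_bivar)
  have "(w ^ n) ^ m = 1" using w(2) by (simp flip: power_mult add: mult.commute power_mult)
  then have invariant: "eval_bivar (B k) qvar (qvar ^ n) = eval_bivar (B k) qvar y" for k
    unfolding y_def using eval_bivar_root_of_unity_invariant divisible by metis
  have "(\<Sum>k\<le>K. eval_bivar (B k) qvar (qvar ^ n) * subst_rf w (f (n + k)))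
      = (\<Sum>k\<le>N + d. eval_bivar (B k) qvar y * subst_rf w (f (n + k)))"
    unfolding invariant using top
    by (intro sum.mono_neutral_left) (auto simp: ev.hom_zero not_le)
  also have "\<dots> = (\<Sum>i\<le>N. eval_bivar (lam i) qvar y
          * (\<Sum>j\<le>d. eval_bivar (rescale_bivar w i (c j)) qvar y * subst_rf w (f (n + i + j))))"
    unfolding B_def ev.hom_rec_combination sum_rec_combination by (simp add: add.assoc)
  also have "\<dots> = (\<Sum>i\<le>N. eval_bivar (lam i) qvar y
      * subst_rf w (\<Sum>j\<le>d. eval_bivar (c j) qvar (qvar ^ (n + i)) * f (n + i + j)))"
    by (simp add: y_def eval_rescale_bivar_qvar[OF w(1)] s.hom_sum s.hom_mult)
  also have "\<dots> = 0"
    using rec_f by (simp add: s.hom_zero)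
  finally show ?thesis .
qed

theorem corollary1:
  fixes f :: "nat \<Rightarrow> 'a::field_char_0 ratfun"
    and c :: "nat \<Rightarrow> 'a poly poly"
    and d m :: nat
    and \<omega> :: 'a
  assumes roots_of_unity: "\<forall>k>0. \<exists>z::'a. z ^ k = 1 \<and> (\<forall>i. 0 < i \<and> i < k \<longrightarrow> z ^ i \<noteq> 1)"
    and rec: "q_holonomic_rec d c f"
    and m_pos: "m > 0"
    and \<omega>_root: "\<omega> ^ m = 1"
    and \<omega>_order: "\<forall>i. 0 < i \<and> i < m \<longrightarrow> \<omega> ^ i \<noteq> 1"
  shows "\<exists>d' c'. d' \<le> m * d \<and> q_holonomic_rec d' c' (\<lambda>n. subst_rf \<omega> (f n))"
proof -
  \<comment> \<open>Only \<omega>^m = 1 is needed: neither the exact order of \<omega>, nor the roots of unity in the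
    ground field, nor characteristic zero enter the argument.\<close>
  have \<omega>: "\<omega> \<noteq> 0" using \<omega>_root m_pos by (auto simp: power_0_left)
  have c_d: "c d \<noteq> 0" and rec_f: "\<forall>n. (\<Sum>j\<le>d. eval_bivar (c j) qvar (qvar ^ n) * f (n + j)) = 0"
    using rec unfolding q_holonomic_rec_def by auto
  define N where "N = (m - 1) * d"
  define B where "B lam = rec_combination N d lam (\<lambda>i j. rescale_bivar \<omega> i (c j))" for lam
  obtain lam i1 where "i1 \<le> N" "lam i1 \<noteq> 0"
    and divisible: "\<forall>k e. \<not> m dvd e \<longrightarrow> coeff (B lam k) e = 0"
    using exists_multipliers_with_divisible_exponents
        [OF m_pos, of d "\<lambda>i j. rescale_bivar \<omega> i (c j)"]
    unfolding N_def B_def by blast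
  moreover have "\<forall>i\<le>N. rescale_bivar \<omega> i (c d) \<noteq> 0"
    using c_d by (simp add: rescale_bivar_eq_0_iff[OF \<omega>])
  ultimately obtain i0 where i0: "i0 \<le> N" "B lam (i0 + d) \<noteq> 0"
    and above: "\<forall>k>i0 + d. B lam k = 0"
    using rec_combination_leading[of N "\<lambda>i j. rescale_bivar \<omega> i (c j)" d i1 lam]
    unfolding B_def by blast
  have "(\<Sum>k\<le>i0 + d. eval_bivar (B lam k) qvar (qvar ^ n) * subst_rf \<omega> (f (n + k))) = 0" for n
    using subst_rf_combined_recurrence[OF \<omega> \<omega>_root rec_f] divisible above i0
    by (simp add: B_def)
  then have "q_holonomic_rec (i0 + d) (B lam) (\<lambda>n. subst_rf \<omega> (f n))"
    using i0 by (simp add: q_holonomic_rec_def)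
  moreover have "i0 + d \<le> m * d"
    using i0 m_pos by (cases m) (auto simp: N_def)
  ultimately show ?thesis by blast
qed

end
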